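(* Let $\rho_n$ be a density operator on a finite-dimensional Hilbert space $\mathcal{H}_n$, let $\mathcal{C}_n$ be a CPTP map from states on $\mathcal{H}_n$ to states on a subspace $\widetilde{\mathcal{H}}_n\subseteq\mathcal{H}_n$ of dimension $M_n$, and let $\mathcal{D}_n$ be a CPTP map from states on $\widetilde{\mathcal{H}}_n$ to states on $\mathcal{H}_n$. Then for every real $\gamma$, \[ F(\rho_n,\mathcal{D}_n\circ\mathcal{C}_n)\le \mathrm{Tr}\big[\{\rho_n\ge e^{-n\gamma}I_n\}(\rho_n-e^{-n\gamma}I_n)\big]+e^{-n\gamma}M_n . \]
   Context: Spectral projections: for self-adjoint $A=\sum_i\lambda_i|i\rangle\langle i|$, $\{A\ge0\}:=\sum_{\lambda_i\ge0}|i\rangle\langle i|$ and $\{A\ge B\}:=\{A-B\ge0\}$. The entanglement fidelity of a state $\rho$ and a quantum operation $\mathcal{T}$ with Kraus operators $\{T_k\}$ is $F(\rho,\mathcal{T})=\sum_k|\mathrm{Tr}(T_k\rho)|^2$; $I_n$ is the identity on $\mathcal{H}_n$. *)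

theory Defs
  imports Complex_Main "Jordan_Normal_Form.Schur_Decomposition"
begin

definition mtrace :: "complex mat \<Rightarrow> complex" where
  "mtrace A = (\<Sum>i<dim_row A. A $$ (i,i))"

definition hermitian_mat :: "nat \<Rightarrow> complex mat \<Rightarrow> bool" where
  "hermitian_mat d A \<longleftrightarrow> A \<in> carrier_mat d d \<and> mat_adjoint A = A"

(* positive semidefinite: Hermitian with <v, A v> >= 0 (the form is real for Hermitian A) *)
definition psd_mat :: "nat \<Rightarrow> complex mat \<Rightarrow> bool" where
  "psd_mat d A \<longleftrightarrow> hermitian_mat d A \<and>
     (\<forall>v \<in> carrier_vec d. 0 \<le> Re ((A *\<^sub>v v) \<bullet>c v))"

definition density_op :: "nat \<Rightarrow> complex mat \<Rightarrow> bool" where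
  "density_op d \<rho> \<longleftrightarrow> psd_mat d \<rho> \<and> mtrace \<rho> = 1"

definition unitary_mat :: "nat \<Rightarrow> complex mat \<Rightarrow> bool" where
  "unitary_mat d U \<longleftrightarrow> U \<in> carrier_mat d d \<and> mat_adjoint U * U = 1\<^sub>m d"

definition spec_proj_nonneg :: "complex mat \<Rightarrow> complex mat" where
  "spec_proj_nonneg A = (SOME P. \<exists>U (lam :: nat \<Rightarrow> real).
      unitary_mat (dim_row A) U \<and>
      A = U * mat_diag (dim_row A) (\<lambda>i. complex_of_real (lam i)) * mat_adjoint U \<and>
      P = U * mat_diag (dim_row A) (\<lambda>i. if lam i \<ge> 0 then 1 else 0) * mat_adjoint U)"

definition spec_proj_ge :: "complex mat \<Rightarrow> complex mat \<Rightarrow> complex mat" where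
  "spec_proj_ge A B = spec_proj_nonneg (A - B)"

definition cptp_kraus :: "nat \<Rightarrow> nat \<Rightarrow> complex mat list \<Rightarrow> bool" where
  "cptp_kraus din dout Ks \<longleftrightarrow> (\<forall>K \<in> set Ks. K \<in> carrier_mat dout din) \<and>
     foldr (\<lambda>K S. mat_adjoint K * K + S) Ks (0\<^sub>m din din) = 1\<^sub>m din"

definition kraus_compose :: "complex mat list \<Rightarrow> complex mat list \<Rightarrow> complex mat list" where
  "kraus_compose Ds Cs = [D * C. D \<leftarrow> Ds, C \<leftarrow> Cs]"

definition ent_fidelity :: "complex mat \<Rightarrow> complex mat list \<Rightarrow> real" where
  "ent_fidelity \<rho> Ts = (\<Sum>T \<leftarrow> Ts. (cmod (mtrace (T * \<rho>)))\<^sup>2)"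

end

theory Submission
  imports Defs "Jordan_Normal_Form.Spectral_Radius" "HOL-Analysis.Convex"
begin

(* Diagonalise rho - c I, with c = exp (-n gamma), as U diag(lam) U^dagger; then
   rho = sum_l p_l |u_l><u_l| with p_l = lam_l + c, and the right-hand side equals
   sum_l max (p_l - c) 0 + c M.  Replacing the Kraus operators D, C by U^dagger D and C U
   (still trace preserving) reduces the left-hand side to the case of diagonal rho, where
   Tr (D C rho) = sum_l p_l a_l with a_l = (D C)_ll.  Convexity of |.|^2 gives
   F <= sum_l p_l f_l with f_l = sum_{D,C} |a_l|^2.  Trace preservation of C and D gives
   f_l <= 1, and Cauchy-Schwarz with trace preservation of C gives f_l <= g_l, the squared
   norm of row l of the decoders, and sum_l g_l = M.  Hence p_l f_l <= max (p_l - c) 0 + c g_l,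
   and summing over l gives the bound. *)

section \<open>Unitary matrices and traces\<close>

lemma dim_row_mat_adjoint [simp]: "dim_row (mat_adjoint A) = dim_col A"
  and dim_col_mat_adjoint [simp]: "dim_col (mat_adjoint A) = dim_row A"
  unfolding mat_adjoint_def by (simp_all add: mat_of_rows_def)

lemma mat_adjoint_carrier [simp]: "A \<in> carrier_mat n m \<Longrightarrow> mat_adjoint A \<in> carrier_mat m n"
  by (intro carrier_matI) auto

lemma index_mat_adjoint [simp]:
  "i < dim_col A \<Longrightarrow> j < dim_row A \<Longrightarrow> mat_adjoint A $$ (i,j) = conjugate (A $$ (j,i))"
  unfolding mat_adjoint_def by (simp add: mat_of_rows_def)

lemma mat_adjoint_adjoint [simp]: "mat_adjoint (mat_adjoint (A :: complex mat)) = A"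
  by (rule eq_matI) auto

lemma dim_row_mat_diag [simp]: "dim_row (mat_diag n f) = n"
  and dim_col_mat_diag [simp]: "dim_col (mat_diag n f) = n"
  unfolding mat_diag_def by simp_all

lemma index_mult_mat_sum:
  "A \<in> carrier_mat n k \<Longrightarrow> B \<in> carrier_mat k m \<Longrightarrow> i < n \<Longrightarrow> j < m \<Longrightarrow>
   (A * B) $$ (i,j) = (\<Sum>l<k. A $$ (i,l) * B $$ (l,j))"
  by (auto simp: scalar_prod_def atLeast0LessThan intro!: sum.cong)

lemma mat_adjoint_mult:
  assumes "(A :: complex mat) \<in> carrier_mat n k" and "B \<in> carrier_mat k m"
  shows "mat_adjoint (A * B) = mat_adjoint B * mat_adjoint A"
proof (rule eq_matI)
  fix i j assume "i < dim_row (mat_adjoint B * mat_adjoint A)" "j < dim_col (mat_adjoint B * mat_adjoint A)"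
  with assms have ij: "i < m" "j < n" by auto
  with assms show "mat_adjoint (A * B) $$ (i, j) = (mat_adjoint B * mat_adjoint A) $$ (i, j)"
    by (simp add: index_mult_mat_sum[of _ n k _ m] index_mult_mat_sum[of _ m k _ n] mult.commute
        del: index_mult_mat(1))
qed (use assms in auto)

lemma index_mult_diag_mult_mat:
  assumes "X \<in> carrier_mat p n" "Y \<in> carrier_mat n q" "i < p" "j < q"
  shows "(X * mat_diag n f * Y) $$ (i,j) = (\<Sum>l<n. X $$ (i,l) * f l * Y $$ (l,j))"
  using assms by (simp add: mat_diag_mult_right index_mult_mat_sum[of _ p n _ q] del: index_mult_mat(1))

lemma unitary_mat_right_inverse:
  "unitary_mat n U \<Longrightarrow> U * mat_adjoint U = 1\<^sub>m n"
  unfolding unitary_mat_def using mat_mult_left_right_inverse[of "mat_adjoint U" n U] by auto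

lemma unitary_mat_adjoint_mult_cancel:
  "unitary_mat n U \<Longrightarrow> X \<in> carrier_mat n k \<Longrightarrow> mat_adjoint U * (U * X) = X"
  unfolding unitary_mat_def by (simp add: assoc_mult_mat[of _ n n _ n _ k, symmetric])

lemma unitary_mat_cols_orthonormal:
  assumes "unitary_mat n U" "a < n" "b < n"
  shows "(\<Sum>l<n. cnj (U $$ (l,a)) * U $$ (l,b)) = (if a = b then 1 else 0)"
proof -
  have U: "U \<in> carrier_mat n n" and UU: "mat_adjoint U * U = 1\<^sub>m n"
    using assms(1) unfolding unitary_mat_def by auto
  have "(\<Sum>l<n. cnj (U $$ (l,a)) * U $$ (l,b)) = (mat_adjoint U * U) $$ (a,b)"
    using U assms(2,3) by (simp add: index_mult_mat_sum[of _ n n _ n] del: index_mult_mat(1))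
  also have "\<dots> = (if a = b then 1 else 0)"
    using UU assms by simp
  finally show ?thesis .
qed

lemma unitary_mat_mult:
  assumes "unitary_mat n U" "unitary_mat n V"
  shows "unitary_mat n (U * V)"
proof -
  have U: "U \<in> carrier_mat n n" and V: "V \<in> carrier_mat n n"
    and "mat_adjoint U * U = 1\<^sub>m n" "mat_adjoint V * V = 1\<^sub>m n"
    using assms unfolding unitary_mat_def by auto
  moreover have "mat_adjoint (U * V) * (U * V) = mat_adjoint V * ((mat_adjoint U * U) * V)"
    using U V by (simp add: mat_adjoint_mult[OF U V] assoc_mult_mat[of _ n n _ n _ n])
  ultimately show ?thesis unfolding unitary_mat_def by simp
qed

lemma unitary_mat_conj_eq:
  assumes W: "unitary_mat n W" and A: "A \<in> carrier_mat n n"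
    and V: "V \<in> carrier_mat n n" and D: "D \<in> carrier_mat n n"
    and conj: "mat_adjoint W * A * W = V * D * mat_adjoint V"
  shows "A = (W * V) * D * mat_adjoint (W * V)"
proof -
  have Wc: "W \<in> carrier_mat n n" using W unfolding unitary_mat_def by auto
  have "A = (W * mat_adjoint W) * A * (W * mat_adjoint W)"
    using A unitary_mat_right_inverse[OF W] by simp
  also have "\<dots> = W * (mat_adjoint W * A * W) * mat_adjoint W"
    using A Wc by (simp add: assoc_mult_mat[of _ n n _ n _ n] mult_carrier_mat[of _ n n _ n])
  also have "\<dots> = (W * V) * D * mat_adjoint (W * V)"
    unfolding conj using Wc V D
    by (simp add: assoc_mult_mat[of _ n n _ n _ n] mat_adjoint_mult[OF Wc V] mult_carrier_mat[of _ n n _ n])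
  finally show ?thesis .
qed

lemma unitary_diag_mult:
  assumes "unitary_mat d U"
  shows "(U * mat_diag d f * mat_adjoint U) * (U * mat_diag d g * mat_adjoint U)
    = U * mat_diag d (\<lambda>i. f i * g i) * mat_adjoint U"
proof -
  have "U \<in> carrier_mat d d" using assms unfolding unitary_mat_def by auto
  then show ?thesis
    unfolding mat_diag_diag[symmetric]
    by (simp add: assoc_mult_mat[of _ d d _ d _ d] mult_carrier_mat[of _ d d _ d]
        unitary_mat_adjoint_mult_cancel[OF assms, of _ d] del: mat_diag_diag)
qed

lemma unitary_diag_shift:
  assumes U: "unitary_mat d U" and A: "A \<in> carrier_mat d d"
    and A_eq: "A - c \<cdot>\<^sub>m 1\<^sub>m d = U * mat_diag d f * mat_adjoint U"
  shows "A = U * mat_diag d (\<lambda>i. f i + c) * mat_adjoint U"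
proof (rule eq_matI)
  have Uc: "U \<in> carrier_mat d d" using U unfolding unitary_mat_def by auto
  fix i j assume "i < dim_row (U * mat_diag d (\<lambda>i. f i + c) * mat_adjoint U)"
    "j < dim_col (U * mat_diag d (\<lambda>i. f i + c) * mat_adjoint U)"
  then have ij: "i < d" "j < d" using Uc by auto
  have "(U * mat_adjoint U) $$ (i,j) = (\<Sum>l<d. U $$ (i,l) * cnj (U $$ (j,l)))"
    using Uc ij by (simp add: index_mult_mat_sum[of _ d d _ d] del: index_mult_mat(1))
  then have rows: "(\<Sum>l<d. U $$ (i,l) * cnj (U $$ (j,l))) = (if i = j then 1 else 0)"
    using unitary_mat_right_inverse[OF U] ij by simp
  have "(U * mat_diag d (\<lambda>i. f i + c) * mat_adjoint U) $$ (i,j)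
      = (\<Sum>l<d. U $$ (i,l) * f l * cnj (U $$ (j,l))) + c * (\<Sum>l<d. U $$ (i,l) * cnj (U $$ (j,l)))"
    using Uc ij by (simp add: index_mult_diag_mult_mat[of _ d d _ d] algebra_simps sum.distrib
        sum_distrib_left del: index_mult_mat(1))
  also have "\<dots> = (A - c \<cdot>\<^sub>m 1\<^sub>m d) $$ (i,j) + c * (if i = j then 1 else 0)"
    unfolding A_eq rows
    using Uc ij by (simp add: index_mult_diag_mult_mat[of _ d d _ d] del: index_mult_mat(1))
  also have "\<dots> = A $$ (i,j)"
    using A ij by simp
  finally show "A $$ (i,j) = (U * mat_diag d (\<lambda>i. f i + c) * mat_adjoint U) $$ (i,j)" ..
qed (use assms in \<open>auto simp: unitary_mat_def\<close>)

lemma mtrace_mult_comm: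
  assumes "A \<in> carrier_mat n m" "B \<in> carrier_mat m n"
  shows "mtrace (A * B) = mtrace (B * A)"
proof -
  have "mtrace (A * B) = (\<Sum>i<n. \<Sum>l<m. A $$ (i,l) * B $$ (l,i))"
    using assms by (simp add: mtrace_def index_mult_mat_sum[of _ n m _ n] del: index_mult_mat(1))
  also have "\<dots> = (\<Sum>l<m. \<Sum>i<n. B $$ (l,i) * A $$ (i,l))"
    by (subst sum.swap) (simp add: mult.commute)
  also have "\<dots> = mtrace (B * A)"
    using assms by (simp add: mtrace_def index_mult_mat_sum[of _ m n _ m] del: index_mult_mat(1))
  finally show ?thesis .
qed

lemma mtrace_mat_diag [simp]: "mtrace (mat_diag d f) = (\<Sum>l<d. f l)"
  by (simp add: mtrace_def mat_diag_def)

lemma mtrace_mult_mult_diag: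
  assumes "D \<in> carrier_mat d M" "C \<in> carrier_mat M d"
  shows "mtrace (D * C * mat_diag d f) = (\<Sum>l<d. f l * (\<Sum>m<M. D $$ (l,m) * C $$ (m,l)))"
proof -
  have DC: "D * C \<in> carrier_mat d d" using assms by (rule mult_carrier_mat)
  then have "mtrace (D * C * mat_diag d f) = (\<Sum>l<d. (D * C) $$ (l,l) * f l)"
    by (simp add: mtrace_def mat_diag_mult_right[OF DC])
  also have "\<dots> = (\<Sum>l<d. f l * (\<Sum>m<M. D $$ (l,m) * C $$ (m,l)))"
    using assms by (intro sum.cong refl) (simp add: index_mult_mat_sum[of _ d M _ d] del: index_mult_mat(1))
  finally show ?thesis .
qed

lemma mtrace_unitary_diag:
  assumes "unitary_mat d U"
  shows "mtrace (U * mat_diag d f * mat_adjoint U) = (\<Sum>l<d. f l)"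
proof -
  have U: "U \<in> carrier_mat d d" using assms unfolding unitary_mat_def by auto
  then have "U * mat_diag d f \<in> carrier_mat d d" by (simp add: mult_carrier_mat[of _ d d _ d])
  with U have "mtrace (U * mat_diag d f * mat_adjoint U) = mtrace (mat_adjoint U * (U * mat_diag d f))"
    by (intro mtrace_mult_comm) auto
  also have "\<dots> = (\<Sum>l<d. f l)"
    by (simp add: unitary_mat_adjoint_mult_cancel[OF assms, of _ d])
  finally show ?thesis .
qed

lemma mtrace_unitary_diag_pos_part:
  assumes "unitary_mat d U"
  shows "Re (mtrace ((U * mat_diag d (\<lambda>i. if lam i \<ge> 0 then 1 else 0) * mat_adjoint U)
      * (U * mat_diag d (\<lambda>i. complex_of_real (lam i)) * mat_adjoint U))) = (\<Sum>i<d. max (lam i) 0)"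
  unfolding unitary_diag_mult[OF assms] mtrace_unitary_diag[OF assms]
  by (auto simp: Re_sum max_def intro!: sum.cong)

lemma cscalar_prod_mult_col:
  fixes A U :: "complex mat"
  assumes "A \<in> carrier_mat n n" "U \<in> carrier_mat n m" "i < m"
  shows "(A *\<^sub>v col U i) \<bullet>c col U i = (mat_adjoint U * A * U) $$ (i,i)"
proof -
  have "(mat_adjoint U * A * U) $$ (i,i) = (mat_adjoint U * (A * U)) $$ (i,i)"
    using assms by (simp add: assoc_mult_mat[of _ m n _ n _ m])
  also have "\<dots> = (\<Sum>k<n. cnj (U $$ (k,i)) * (A * U) $$ (k,i))"
    using assms by (simp add: index_mult_mat_sum[of _ m n _ m] del: index_mult_mat(1))
  also have "\<dots> = (A *\<^sub>v col U i) \<bullet>c col U i"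
    using assms by (auto simp: scalar_prod_def atLeast0LessThan mult.commute intro!: sum.cong)
  finally show ?thesis ..
qed

section \<open>Spectral theorem for Hermitian matrices\<close>

lemma unitary_mat_normalized_cols:
  fixes ws :: "complex vec list"
  assumes ws: "set ws \<subseteq> carrier_vec n" "corthogonal ws" "length ws = n"
  defines "s j \<equiv> sqrt (Re (ws ! j \<bullet>c ws ! j))"
  shows "unitary_mat n (mat n n (\<lambda>(i,j). ws ! j $ i / s j))"
proof -
  define W where "W = mat n n (\<lambda>(i,j). ws ! j $ i / s j)"
  have W: "W \<in> carrier_mat n n" unfolding W_def by auto
  have wsc: "ws ! j \<in> carrier_vec n" if "j < n" for j using ws that by auto
  have orth: "ws ! i \<bullet>c ws ! j = 0 \<longleftrightarrow> i \<noteq> j" if "i < n" "j < n" for i j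
    using ws that unfolding corthogonal_def by auto
  have norm_sq: "ws ! j \<bullet>c ws ! j = complex_of_real (s j) * complex_of_real (s j)" for j
  proof -
    have real: "ws ! j \<bullet>c ws ! j = complex_of_real (Re (ws ! j \<bullet>c ws ! j))"
      and nonneg: "0 \<le> Re (ws ! j \<bullet>c ws ! j)"
      using conjugate_square_ge_0_vec[of "ws ! j"] by (auto simp: less_eq_complex_def complex_eq_iff)
    have "complex_of_real (s j) * complex_of_real (s j) = complex_of_real (s j * s j)"
      by simp
    also have "s j * s j = Re (ws ! j \<bullet>c ws ! j)"
      unfolding s_def using nonneg by simp
    finally show ?thesis using real by simp
  qed
  have s_nonzero: "s j \<noteq> 0" if "j < n" for j
  proof
    assume "s j = 0"
    then have "ws ! j \<bullet>c ws ! j = 0" using norm_sq[of j] by simp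
    with orth[OF that that] show False by simp
  qed
  have "(mat_adjoint W * W) $$ (i,j) = 1\<^sub>m n $$ (i,j)" if ij: "i < n" "j < n" for i j
  proof -
    have "(mat_adjoint W * W) $$ (i,j)
        = (\<Sum>l<n. ws ! j $ l * cnj (ws ! i $ l)) / (complex_of_real (s i) * complex_of_real (s j))"
      using W ij by (simp add: index_mult_mat_sum[of _ n n _ n] sum_divide_distrib W_def mult.commute
          del: index_mult_mat(1))
    also have "(\<Sum>l<n. ws ! j $ l * cnj (ws ! i $ l)) = ws ! j \<bullet>c ws ! i"
      using wsc[OF ij(1)] wsc[OF ij(2)] by (simp add: scalar_prod_def atLeast0LessThan)
    finally show ?thesis
      using ij s_nonzero[OF ij(1)] by (cases "i = j") (auto simp: norm_sq orth)
  qed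
  then have "mat_adjoint W * W = 1\<^sub>m n"
    using W by (intro eq_matI) auto
  with W show ?thesis unfolding unitary_mat_def W_def by simp
qed

lemma unitary_mat_first_col_parallel:
  fixes v :: "complex vec"
  assumes v: "v \<in> carrier_vec n" "v \<noteq> 0\<^sub>v n"
  shows "\<exists>W c. unitary_mat n W \<and> col W 0 = c \<cdot>\<^sub>v v"
proof -
  interpret cof_vec_space n "TYPE(complex)" .
  define b where "b = basis_completion v"
  from basis_completion[OF v, folded b_def]
  have b: "distinct b" "\<not> lin_dep (set b)" "set b \<subseteq> carrier_vec n" "hd b = v" "length b = n"
    by auto
  have "n \<noteq> 0"
  proof
    assume "n = 0"
    then have "v = 0\<^sub>v n" using v(1) by (intro eq_vecI) auto
    with v(2) show False ..
  qed
  with b obtain vs where bv: "b = v # vs" by (cases b) auto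
  define ws where "ws = gram_schmidt n b"
  from gram_schmidt_result[OF b(3,1,2) ws_def]
  have ws: "set ws \<subseteq> carrier_vec n" "corthogonal ws" "length ws = n" by (auto simp: b(5))
  have "ws ! 0 = v"
    using gram_schmidt_hd[OF v(1), of vs] ws(3) \<open>n \<noteq> 0\<close> unfolding ws_def bv
    by (cases "gram_schmidt n (v # vs)") auto
  define W where "W = mat n n (\<lambda>(i,j). ws ! j $ i / sqrt (Re (ws ! j \<bullet>c ws ! j)))"
  have "unitary_mat n W"
    unfolding W_def by (rule unitary_mat_normalized_cols[OF ws])
  moreover have "col W 0 = (1 / sqrt (Re (v \<bullet>c v))) \<cdot>\<^sub>v v"
    using \<open>ws ! 0 = v\<close> \<open>n \<noteq> 0\<close> v(1) by (intro eq_vecI) (simp_all add: W_def)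
  ultimately show ?thesis by blast
qed

lemma unitary_conj_first_col_eigenvector:
  assumes A: "A \<in> carrier_mat n n" and W: "unitary_mat n W"
    and eigen: "A *\<^sub>v col W 0 = e \<cdot>\<^sub>v col W 0" and i: "i < n"
  shows "(mat_adjoint W * A * W) $$ (i,0) = (if i = 0 then e else 0)"
proof -
  have Wc: "W \<in> carrier_mat n n" using W unfolding unitary_mat_def by auto
  have AW: "(A * W) $$ (l,0) = e * W $$ (l,0)" if "l < n" for l
  proof -
    have "(A * W) $$ (l,0) = (A *\<^sub>v col W 0) $ l" using A Wc i that by simp
    then show ?thesis using Wc i that unfolding eigen by simp
  qed
  have "(mat_adjoint W * A * W) $$ (i,0) = (\<Sum>l<n. cnj (W $$ (l,i)) * (A * W) $$ (l,0))"
    using A Wc i by (simp add: assoc_mult_mat[of _ n n _ n _ n] index_mult_mat_sum[of _ n n _ n]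
        del: index_mult_mat(1))
  also have "\<dots> = e * (\<Sum>l<n. cnj (W $$ (l,i)) * W $$ (l,0))"
    unfolding sum_distrib_left by (intro sum.cong refl) (simp add: AW)
  finally show ?thesis
    using unitary_mat_cols_orthonormal[OF W i, of 0] i by simp
qed

lemma hermitian_mat_first_col:
  assumes B: "hermitian_mat (Suc m) B"
    and first_col: "\<And>i. i < Suc m \<Longrightarrow> B $$ (i,0) = (if i = 0 then e else 0)"
  shows "e \<in> \<real>"
    and "\<And>j. j < Suc m \<Longrightarrow> B $$ (0,j) = (if j = 0 then e else 0)"
    and "hermitian_mat m (mat m m (\<lambda>(i,j). B $$ (Suc i, Suc j)))"
proof -
  have "B \<in> carrier_mat (Suc m) (Suc m)" and "mat_adjoint B = B"
    using B unfolding hermitian_mat_def by auto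
  have B_sym: "B $$ (i,j) = cnj (B $$ (j,i))" if "i < Suc m" "j < Suc m" for i j
  proof -
    have "B $$ (i,j) = mat_adjoint B $$ (i,j)" using \<open>mat_adjoint B = B\<close> by simp
    also have "\<dots> = cnj (B $$ (j,i))" using \<open>B \<in> carrier_mat (Suc m) (Suc m)\<close> that by simp
    finally show ?thesis .
  qed
  have "cnj e = e"
    using B_sym[of 0 0] unfolding first_col[of 0, simplified] by simp
  then show "e \<in> \<real>" by (simp add: Reals_cnj_iff)
  show "B $$ (0,j) = (if j = 0 then e else 0)" if "j < Suc m" for j
  proof (cases "j = 0")
    case True
    then show ?thesis using first_col[of 0] by simp
  next
    case False
    then show ?thesis using B_sym[of 0 j] first_col[OF that] that by simp
  qed
  let ?A = "mat m m (\<lambda>(i,j). B $$ (Suc i, Suc j))"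
  have "mat_adjoint ?A = ?A"
  proof (rule eq_matI)
    fix i j assume "i < dim_row ?A" "j < dim_col ?A"
    then show "mat_adjoint ?A $$ (i,j) = ?A $$ (i,j)"
      by (simp add: B_sym[of "Suc i" "Suc j"])
  qed simp_all
  then show "hermitian_mat m ?A"
    unfolding hermitian_mat_def by simp
qed

lemma hermitian_mat_unitary_conj:
  assumes "hermitian_mat n A" "W \<in> carrier_mat n n"
  shows "hermitian_mat n (mat_adjoint W * A * W)"
proof -
  have A: "A \<in> carrier_mat n n" and "mat_adjoint A = A"
    using assms(1) unfolding hermitian_mat_def by auto
  with assms(2) show ?thesis
    unfolding hermitian_mat_def
    by (auto simp: mat_adjoint_mult[of _ n n _ n] assoc_mult_mat[of _ n n _ n _ n]
        intro!: mult_carrier_mat)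
qed

lemma unitary_diagonalization_extend:
  fixes B U :: "complex mat" and lam :: "nat \<Rightarrow> real"
  assumes B: "B \<in> carrier_mat (Suc m) (Suc m)"
    and first_col: "\<And>i. i < Suc m \<Longrightarrow> B $$ (i,0) = (if i = 0 then complex_of_real e else 0)"
    and first_row: "\<And>j. j < Suc m \<Longrightarrow> B $$ (0,j) = (if j = 0 then complex_of_real e else 0)"
    and U: "unitary_mat m U"
    and lower: "\<And>i j. i < m \<Longrightarrow> j < m \<Longrightarrow>
      B $$ (Suc i, Suc j) = (U * mat_diag m (\<lambda>i. complex_of_real (lam i)) * mat_adjoint U) $$ (i,j)"
  shows "\<exists>V mu. unitary_mat (Suc m) V \<and>
    B = V * mat_diag (Suc m) (\<lambda>i. complex_of_real (mu i)) * mat_adjoint V"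
proof -
  have Uc: "U \<in> carrier_mat m m"
    using U unfolding unitary_mat_def by auto
  define V where "V = mat (Suc m) (Suc m)
    (\<lambda>(i,j). if i = 0 \<or> j = 0 then of_bool (i = j) else U $$ (i - 1, j - 1))"
  define mu where "mu = case_nat e lam"
  have V: "V \<in> carrier_mat (Suc m) (Suc m)" unfolding V_def by simp
  have "(mat_adjoint V * V) $$ (i,j) = 1\<^sub>m (Suc m) $$ (i,j)" if "i < Suc m" "j < Suc m" for i j
  proof -
    have "(mat_adjoint V * V) $$ (i,j)
        = cnj (V $$ (0,i)) * V $$ (0,j) + (\<Sum>l<m. cnj (V $$ (Suc l,i)) * V $$ (Suc l,j))"
      using V that by (simp add: index_mult_mat_sum[of _ "Suc m" "Suc m" _ "Suc m"] sum.lessThan_Suc_shift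
          del: index_mult_mat(1) sum.lessThan_Suc)
    also have "\<dots> = 1\<^sub>m (Suc m) $$ (i,j)"
      using that unitary_mat_cols_orthonormal[OF U] by (cases i; cases j) (auto simp: V_def)
    finally show ?thesis .
  qed
  then have "unitary_mat (Suc m) V"
    using V unfolding unitary_mat_def by (auto intro: eq_matI)
  moreover have "B $$ (i,j) = (V * mat_diag (Suc m) (\<lambda>i. complex_of_real (mu i)) * mat_adjoint V) $$ (i,j)"
    if "i < Suc m" "j < Suc m" for i j
  proof -
    have "(V * mat_diag (Suc m) (\<lambda>i. complex_of_real (mu i)) * mat_adjoint V) $$ (i,j)
        = V $$ (i,0) * complex_of_real e * cnj (V $$ (j,0))
          + (\<Sum>l<m. V $$ (i,Suc l) * complex_of_real (lam l) * cnj (V $$ (j,Suc l)))"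
      using V that by (simp add: index_mult_diag_mult_mat[of _ "Suc m" "Suc m" _ "Suc m"]
          sum.lessThan_Suc_shift mu_def del: sum.lessThan_Suc index_mult_mat(1))
    also have "\<dots> = B $$ (i,j)"
      using that first_col first_row lower Uc
      by (cases i; cases j)
        (auto simp: V_def index_mult_diag_mult_mat[of _ m m _ m] simp del: index_mult_mat(1))
    finally show ?thesis by simp
  qed
  then have "B = V * mat_diag (Suc m) (\<lambda>i. complex_of_real (mu i)) * mat_adjoint V"
    using B V by (intro eq_matI) auto
  ultimately show ?thesis by blast
qed

theorem hermitian_mat_unitary_diagonalizable:
  assumes "hermitian_mat n A"
  shows "\<exists>U lam. unitary_mat n U \<and>
    A = U * mat_diag n (\<lambda>i. complex_of_real (lam i)) * mat_adjoint U"
  using assms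
proof (induction n arbitrary: A)
  case 0
  then show ?case
    by (intro exI[of _ "1\<^sub>m 0"] exI[of _ "\<lambda>_. 0"])
      (auto simp: unitary_mat_def hermitian_mat_def intro!: eq_matI)
next
  case (Suc m A)
  have A: "A \<in> carrier_mat (Suc m) (Suc m)"
    using Suc.prems unfolding hermitian_mat_def by auto
  obtain e where "eigenvalue A e"
    using spectrum_non_empty[OF A] unfolding spectrum_def by auto
  then obtain v where v: "v \<in> carrier_vec (Suc m)" "v \<noteq> 0\<^sub>v (Suc m)" and Av: "A *\<^sub>v v = e \<cdot>\<^sub>v v"
    using A unfolding eigenvalue_def eigenvector_def by auto
  obtain W c where W: "unitary_mat (Suc m) W" and W_col: "col W 0 = c \<cdot>\<^sub>v v"
    using unitary_mat_first_col_parallel[OF v] by blast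
  have Wc: "W \<in> carrier_mat (Suc m) (Suc m)" using W unfolding unitary_mat_def by auto
  have "A *\<^sub>v col W 0 = e \<cdot>\<^sub>v col W 0"
    unfolding W_col using A v by (simp add: Av mult_mat_vec smult_smult_assoc mult.commute)
  txt \<open>Deflation: conjugating by \<open>W\<close> clears the first row and column off the diagonal.\<close>
  define B where "B = mat_adjoint W * A * W"
  have B: "B \<in> carrier_mat (Suc m) (Suc m)" and herm: "hermitian_mat (Suc m) B"
    using hermitian_mat_unitary_conj[OF Suc.prems Wc] unfolding B_def hermitian_mat_def by auto
  have first_col: "B $$ (i,0) = (if i = 0 then e else 0)" if "i < Suc m" for i
    unfolding B_def by (rule unitary_conj_first_col_eigenvector[OF A W \<open>A *\<^sub>v col W 0 = e \<cdot>\<^sub>v col W 0\<close> that])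
  obtain r where e: "e = complex_of_real r"
    using hermitian_mat_first_col(1)[OF herm first_col] by (auto elim: Reals_cases)
  obtain U lam where U: "unitary_mat m U" and A'_eq: "mat m m (\<lambda>(i,j). B $$ (Suc i, Suc j))
      = U * mat_diag m (\<lambda>i. complex_of_real (lam i)) * mat_adjoint U"
    using Suc.IH[OF hermitian_mat_first_col(3)[OF herm first_col]] by blast
  have lower: "B $$ (Suc i, Suc j) = (U * mat_diag m (\<lambda>i. complex_of_real (lam i)) * mat_adjoint U) $$ (i,j)"
    if "i < m" "j < m" for i j
    using that unfolding A'_eq[symmetric] by simp
  obtain V mu where V: "unitary_mat (Suc m) V"
    and B_eq: "B = V * mat_diag (Suc m) (\<lambda>i. complex_of_real (mu i)) * mat_adjoint V"
    using unitary_diagonalization_extend[OF B _ _ U lower, of r] first_col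
      hermitian_mat_first_col(2)[OF herm first_col] unfolding e by blast
  have "A = (W * V) * mat_diag (Suc m) (\<lambda>i. complex_of_real (mu i)) * mat_adjoint (W * V)"
    using unitary_mat_conj_eq[OF W A _ _ B_eq[unfolded B_def]] V unfolding unitary_mat_def by simp
  then show ?case using unitary_mat_mult[OF W V] by blast
qed

lemma hermitian_mat_minus_real_scalar:
  assumes "hermitian_mat d A"
  shows "hermitian_mat d (A - complex_of_real c \<cdot>\<^sub>m 1\<^sub>m d)"
proof -
  have A: "A \<in> carrier_mat d d" and "mat_adjoint A = A"
    using assms unfolding hermitian_mat_def by auto
  then have "cnj (A $$ (j,i)) = A $$ (i,j)" if "i < d" "j < d" for i j
    using that by (metis carrier_matD index_mat_adjoint conjugate_complex_def)
  with A show ?thesis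
    unfolding hermitian_mat_def by (auto intro!: eq_matI)
qed

lemma spec_proj_nonneg_hermitian:
  assumes "hermitian_mat n X"
  obtains U lam where "unitary_mat n U"
    "X = U * mat_diag n (\<lambda>i. complex_of_real (lam i)) * mat_adjoint U"
    "spec_proj_nonneg X = U * mat_diag n (\<lambda>i. if lam i \<ge> 0 then 1 else 0) * mat_adjoint U"
proof -
  have "dim_row X = n" using assms unfolding hermitian_mat_def by auto
  moreover obtain U lam where "unitary_mat n U"
    "X = U * mat_diag n (\<lambda>i. complex_of_real (lam i)) * mat_adjoint U"
    using hermitian_mat_unitary_diagonalizable[OF assms] by blast
  ultimately have "\<exists>P U lam. unitary_mat (dim_row X) U \<and>
      X = U * mat_diag (dim_row X) (\<lambda>i. complex_of_real (lam i)) * mat_adjoint U \<and>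
      P = U * mat_diag (dim_row X) (\<lambda>i. if lam i \<ge> 0 then 1 else 0) * mat_adjoint U"
    by blast
  from someI_ex[OF this] have "\<exists>U lam. unitary_mat (dim_row X) U \<and>
      X = U * mat_diag (dim_row X) (\<lambda>i. complex_of_real (lam i)) * mat_adjoint U \<and>
      spec_proj_nonneg X = U * mat_diag (dim_row X) (\<lambda>i. if lam i \<ge> 0 then 1 else 0) * mat_adjoint U"
    unfolding spec_proj_nonneg_def .
  then show ?thesis
    using that unfolding \<open>dim_row X = n\<close> by blast
qed

lemma density_op_unitary_diag:
  fixes p :: "nat \<Rightarrow> real"
  assumes "density_op d (U * mat_diag d (\<lambda>i. complex_of_real (p i)) * mat_adjoint U)" "unitary_mat d U"
  shows "\<forall>i<d. 0 \<le> p i" and "(\<Sum>i<d. p i) = 1"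
proof -
  let ?D = "mat_diag d (\<lambda>i. complex_of_real (p i))"
  let ?\<rho> = "U * ?D * mat_adjoint U"
  have U: "U \<in> carrier_mat d d" using assms(2) unfolding unitary_mat_def by auto
  have \<rho>: "?\<rho> \<in> carrier_mat d d" using U by (simp add: mult_carrier_mat[of _ d d _ d])
  have conj: "mat_adjoint U * ?\<rho> * U = ?D"
    using U by (simp add: assoc_mult_mat[of _ d d _ d _ d] mult_carrier_mat[of _ d d _ d]
        unitary_mat_adjoint_mult_cancel[OF assms(2), of _ d] unitary_mat_def[THEN iffD1, OF assms(2)])
  have "(?\<rho> *\<^sub>v col U i) \<bullet>c col U i = complex_of_real (p i)" if "i < d" for i
    using cscalar_prod_mult_col[OF \<rho> U that] that unfolding conj by (simp add: mat_diag_def)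
  moreover have "0 \<le> Re ((?\<rho> *\<^sub>v col U i) \<bullet>c col U i)" if "i < d" for i
    using assms(1) U that unfolding density_op_def psd_mat_def by auto
  ultimately show "\<forall>i<d. 0 \<le> p i" by fastforce
  have "complex_of_real (\<Sum>i<d. p i) = 1"
    using assms(1) mtrace_unitary_diag[OF assms(2)] unfolding density_op_def by simp
  then show "(\<Sum>i<d. p i) = 1" by (simp only: of_real_eq_1_iff)
qed

section \<open>Kraus operators\<close>

lemma sum_list_sum_swap:
  "(\<Sum>x\<leftarrow>xs. \<Sum>i\<in>I. f x i) = (\<Sum>i\<in>I. \<Sum>x\<leftarrow>xs. f x i)"
  by (induction xs) (simp_all add: sum.distrib)

lemma sum_list_swap:
  "(\<Sum>x\<leftarrow>xs. \<Sum>y\<leftarrow>ys. f x y) = (\<Sum>y\<leftarrow>ys. \<Sum>x\<leftarrow>xs. (f x y :: 'a :: comm_monoid_add))"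
  by (induction xs) (simp_all add: sum_list_addf)

abbreviation kraus_sum :: "nat \<Rightarrow> complex mat list \<Rightarrow> complex mat" where
  "kraus_sum din Ks \<equiv> foldr (\<lambda>K S. mat_adjoint K * K + S) Ks (0\<^sub>m din din)"

lemma kraus_sum_carrier:
  "\<forall>K\<in>set Ks. K \<in> carrier_mat dout din \<Longrightarrow> kraus_sum din Ks \<in> carrier_mat din din"
  by (induction Ks) auto

lemma index_kraus_sum:
  assumes "\<forall>K\<in>set Ks. K \<in> carrier_mat dout din" "j < din" "j' < din"
  shows "kraus_sum din Ks $$ (j,j') = (\<Sum>K\<leftarrow>Ks. \<Sum>r<dout. cnj (K $$ (r,j)) * K $$ (r,j'))"
  using assms
proof (induction Ks)
  case (Cons K Ks)
  then have "K \<in> carrier_mat dout din" and "kraus_sum din Ks \<in> carrier_mat din din"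
    using kraus_sum_carrier by auto
  with Cons show ?case
    by (simp add: index_mult_mat_sum[of _ din dout _ din] del: index_mult_mat(1))
qed simp

lemma cptp_kraus_orthonormal:
  assumes "cptp_kraus din dout Ks" "j < din" "j' < din"
  shows "(\<Sum>K\<leftarrow>Ks. \<Sum>r<dout. cnj (K $$ (r,j)) * K $$ (r,j')) = (if j = j' then 1 else 0)"
  using assms index_kraus_sum[of Ks dout din j j'] unfolding cptp_kraus_def by simp

lemma cptp_kraus_col_norm:
  assumes "cptp_kraus din dout Ks" "j < din"
  shows "(\<Sum>K\<leftarrow>Ks. \<Sum>r<dout. (cmod (K $$ (r,j)))\<^sup>2) = 1"
proof -
  have "complex_of_real (\<Sum>K\<leftarrow>Ks. \<Sum>r<dout. (cmod (K $$ (r,j)))\<^sup>2)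
      = (\<Sum>K\<leftarrow>Ks. \<Sum>r<dout. cnj (K $$ (r,j)) * K $$ (r,j))"
    by (simp add: sum_list_of_real[symmetric] o_def complex_norm_square mult.commute del: of_real_power)
  also have "\<dots> = 1" using cptp_kraus_orthonormal[OF assms assms(2)] by simp
  finally show ?thesis by (simp only: of_real_eq_1_iff)
qed

lemma cptp_kraus_isometry:
  assumes "cptp_kraus din dout Ks"
  shows "(\<Sum>K\<leftarrow>Ks. \<Sum>r<dout. (cmod (\<Sum>j<din. K $$ (r,j) * w j))\<^sup>2) = (\<Sum>j<din. (cmod (w j))\<^sup>2)"
proof -
  have "complex_of_real (\<Sum>K\<leftarrow>Ks. \<Sum>r<dout. (cmod (\<Sum>j<din. K $$ (r,j) * w j))\<^sup>2)
      = (\<Sum>K\<leftarrow>Ks. \<Sum>r<dout. \<Sum>j<din. \<Sum>j'<din. w j * cnj (w j') * (cnj (K $$ (r,j')) * K $$ (r,j)))"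
    by (simp add: sum_list_of_real[symmetric] o_def complex_norm_square sum_product mult_ac
        del: of_real_power)
  also have "\<dots> = (\<Sum>j<din. \<Sum>j'<din. w j * cnj (w j') *
      (\<Sum>K\<leftarrow>Ks. \<Sum>r<dout. cnj (K $$ (r,j')) * K $$ (r,j)))"
    by (simp add: sum_list_sum_swap sum.swap[of _ "{..<dout}"] sum_distrib_left sum_list_const_mult)
  also have "\<dots> = (\<Sum>j<din. \<Sum>j'<din. w j * cnj (w j') * (if j' = j then 1 else 0))"
    using cptp_kraus_orthonormal[OF assms] by (intro sum.cong refl) auto
  also have "\<dots> = (\<Sum>j<din. w j * cnj (w j))"
    by (simp add: if_distrib cong: if_cong)
  also have "\<dots> = complex_of_real (\<Sum>j<din. (cmod (w j))\<^sup>2)"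
    by (simp add: complex_norm_square del: of_real_power)
  finally show ?thesis by (simp only: of_real_eq_iff)
qed

lemma cptp_kraus_sum_norm_sq:
  assumes "cptp_kraus din dout Ks"
  shows "(\<Sum>r<dout. \<Sum>K\<leftarrow>Ks. \<Sum>j<din. (cmod (K $$ (r,j)))\<^sup>2) = real din"
proof -
  have "(\<Sum>r<dout. \<Sum>K\<leftarrow>Ks. \<Sum>j<din. (cmod (K $$ (r,j)))\<^sup>2)
      = (\<Sum>j<din. \<Sum>K\<leftarrow>Ks. \<Sum>r<dout. (cmod (K $$ (r,j)))\<^sup>2)"
    by (simp add: sum_list_sum_swap sum.swap[of _ "{..<dout}"])
  also have "\<dots> = real din"
    using cptp_kraus_col_norm[OF assms] by simp
  finally show ?thesis .
qed

lemma cptp_kraus_mult_left_isometry: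
  assumes Ks: "cptp_kraus din dout Ks" and V: "V \<in> carrier_mat n dout" "mat_adjoint V * V = 1\<^sub>m dout"
  shows "cptp_kraus din n (map (\<lambda>K. V * K) Ks)"
proof -
  have carrier: "\<forall>K\<in>set Ks. K \<in> carrier_mat dout din" and sum: "kraus_sum din Ks = 1\<^sub>m din"
    using Ks unfolding cptp_kraus_def by auto
  have "mat_adjoint (V * K) * (V * K) = mat_adjoint K * K" if "K \<in> set Ks" for K
  proof -
    have K: "K \<in> carrier_mat dout din" using carrier that by auto
    then have "mat_adjoint (V * K) * (V * K) = mat_adjoint K * ((mat_adjoint V * V) * K)"
      using V(1) by (simp add: mat_adjoint_mult[OF V(1) K] assoc_mult_mat[of _ din dout _ n _ din]
          assoc_mult_mat[of _ dout n _ dout _ din] mult_carrier_mat[of _ n dout _ din])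
    with K V(2) show ?thesis by simp
  qed
  then have "kraus_sum din (map (\<lambda>K. V * K) Ks) = kraus_sum din Ks"
    unfolding foldr_map by (intro foldr_cong) auto
  with carrier sum V(1) show ?thesis
    unfolding cptp_kraus_def by auto
qed

lemma kraus_sum_mult_right:
  assumes U: "U \<in> carrier_mat din din" and "\<forall>K\<in>set Ks. K \<in> carrier_mat dout din"
  shows "kraus_sum din (map (\<lambda>K. K * U) Ks) = mat_adjoint U * kraus_sum din Ks * U"
  using assms(2)
proof (induction Ks)
  case Nil
  with U show ?case by simp
next
  case (Cons K Ks)
  then have K: "K \<in> carrier_mat dout din" and S: "kraus_sum din Ks \<in> carrier_mat din din"
    using kraus_sum_carrier by auto
  have "mat_adjoint (K * U) * (K * U) = mat_adjoint U * (mat_adjoint K * K) * U"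
    using K U by (simp add: mat_adjoint_mult[OF K U] assoc_mult_mat[of _ din din _ dout _ din]
        assoc_mult_mat[of _ din din _ din _ din] assoc_mult_mat[of _ din dout _ din _ din]
        mult_carrier_mat[of _ din dout _ din] mult_carrier_mat[of _ dout din _ din])
  with Cons K S U show ?case
    by (simp add: mult_add_distrib_mat[of _ din din _ din] add_mult_distrib_mat[of _ din din _ _ din]
        mult_carrier_mat[of _ din dout _ din] mult_carrier_mat[of _ din din _ din])
qed

lemma cptp_kraus_mult_right_unitary:
  assumes "cptp_kraus din dout Ks" "unitary_mat din U"
  shows "cptp_kraus din dout (map (\<lambda>K. K * U) Ks)"
proof -
  have "U \<in> carrier_mat din din" "mat_adjoint U * U = 1\<^sub>m din"
    using assms(2) unfolding unitary_mat_def by auto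
  with assms(1) show ?thesis
    unfolding cptp_kraus_def by (auto simp: kraus_sum_mult_right)
qed

section \<open>Entanglement fidelity\<close>

lemma cmod_sum_mult_sq_le:
  fixes a b :: "'a \<Rightarrow> complex"
  shows "(cmod (\<Sum>i\<in>I. a i * b i))\<^sup>2 \<le> (\<Sum>i\<in>I. (cmod (a i))\<^sup>2) * (\<Sum>i\<in>I. (cmod (b i))\<^sup>2)"
proof -
  have "cmod (\<Sum>i\<in>I. a i * b i) \<le> (\<Sum>i\<in>I. cmod (a i) * cmod (b i))"
    by (rule order_trans[OF norm_sum]) (simp add: norm_mult)
  then have "(cmod (\<Sum>i\<in>I. a i * b i))\<^sup>2 \<le> (\<Sum>i\<in>I. cmod (a i) * cmod (b i))\<^sup>2"
    by (rule power_mono) simp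
  also have "\<dots> \<le> (\<Sum>i\<in>I. (cmod (a i))\<^sup>2) * (\<Sum>i\<in>I. (cmod (b i))\<^sup>2)"
    by (rule Cauchy_Schwarz_ineq_sum)
  finally show ?thesis .
qed

lemma cmod_convex_comb_sq_le:
  fixes z :: "'a \<Rightarrow> complex"
  assumes "\<And>i. i \<in> I \<Longrightarrow> 0 \<le> p i" "(\<Sum>i\<in>I. p i) = 1"
  shows "(cmod (\<Sum>i\<in>I. complex_of_real (p i) * z i))\<^sup>2 \<le> (\<Sum>i\<in>I. p i * (cmod (z i))\<^sup>2)"
proof -
  have "(\<Sum>i\<in>I. complex_of_real (p i) * z i)
      = (\<Sum>i\<in>I. complex_of_real (sqrt (p i)) * (complex_of_real (sqrt (p i)) * z i))"
    using assms(1) by (intro sum.cong refl) (simp flip: mult.assoc of_real_mult)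
  also have "(cmod \<dots>)\<^sup>2 \<le> (\<Sum>i\<in>I. (cmod (complex_of_real (sqrt (p i))))\<^sup>2)
      * (\<Sum>i\<in>I. (cmod (complex_of_real (sqrt (p i)) * z i))\<^sup>2)"
    by (rule cmod_sum_mult_sq_le)
  also have "\<dots> = (\<Sum>i\<in>I. p i * (cmod (z i))\<^sup>2)"
    using assms by (simp add: norm_mult power_mult_distrib cong: sum.cong)
  finally show ?thesis .
qed

lemma kraus_compose_diag_sq_le_one:
  assumes Cs: "cptp_kraus d M Cs" and Ds: "cptp_kraus M d Ds" and l: "l < d"
  shows "(\<Sum>D\<leftarrow>Ds. \<Sum>C\<leftarrow>Cs. (cmod (\<Sum>m<M. D $$ (l,m) * C $$ (m,l)))\<^sup>2) \<le> 1"
proof -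
  have "(\<Sum>D\<leftarrow>Ds. \<Sum>C\<leftarrow>Cs. (cmod (\<Sum>m<M. D $$ (l,m) * C $$ (m,l)))\<^sup>2)
      \<le> (\<Sum>D\<leftarrow>Ds. \<Sum>C\<leftarrow>Cs. \<Sum>r<d. (cmod (\<Sum>m<M. D $$ (r,m) * C $$ (m,l)))\<^sup>2)"
    using l by (intro sum_list_mono member_le_sum) auto
  also have "\<dots> = (\<Sum>C\<leftarrow>Cs. \<Sum>D\<leftarrow>Ds. \<Sum>r<d. (cmod (\<Sum>m<M. D $$ (r,m) * C $$ (m,l)))\<^sup>2)"
    by (rule sum_list_swap)
  also have "\<dots> = (\<Sum>C\<leftarrow>Cs. \<Sum>m<M. (cmod (C $$ (m,l)))\<^sup>2)"
    using cptp_kraus_isometry[OF Ds] by simp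
  also have "\<dots> = 1"
    by (rule cptp_kraus_col_norm[OF Cs l])
  finally show ?thesis .
qed

lemma kraus_compose_diag_sq_le_row:
  assumes Cs: "cptp_kraus d M Cs" and l: "l < d"
  shows "(\<Sum>D\<leftarrow>Ds. \<Sum>C\<leftarrow>Cs. (cmod (\<Sum>m<M. D $$ (l,m) * C $$ (m,l)))\<^sup>2)
    \<le> (\<Sum>D\<leftarrow>Ds. \<Sum>m<M. (cmod (D $$ (l,m)))\<^sup>2)"
proof -
  have "(\<Sum>D\<leftarrow>Ds. \<Sum>C\<leftarrow>Cs. (cmod (\<Sum>m<M. D $$ (l,m) * C $$ (m,l)))\<^sup>2)
      \<le> (\<Sum>D\<leftarrow>Ds. \<Sum>C\<leftarrow>Cs. (\<Sum>m<M. (cmod (D $$ (l,m)))\<^sup>2) * (\<Sum>m<M. (cmod (C $$ (m,l)))\<^sup>2))"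
    by (intro sum_list_mono cmod_sum_mult_sq_le)
  also have "\<dots> = (\<Sum>D\<leftarrow>Ds. \<Sum>m<M. (cmod (D $$ (l,m)))\<^sup>2)"
    using cptp_kraus_col_norm[OF Cs l] by (simp add: sum_list_const_mult)
  finally show ?thesis .
qed

lemma mult_le_pos_part_add:
  fixes p f g c :: real
  assumes "0 \<le> f" "f \<le> 1" "f \<le> g" "0 \<le> c"
  shows "p * f \<le> max (p - c) 0 + c * g"
proof -
  have "(p - c) * f \<le> max (p - c) 0"
    using assms(1,2) by (cases "0 \<le> p - c") (auto intro: mult_left_le mult_nonpos_nonneg)
  moreover have "c * f \<le> c * g"
    using assms(3,4) by (rule mult_left_mono)
  ultimately show ?thesis by (simp add: algebra_simps)
qed

lemma ent_fidelity_kraus_compose: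
  "ent_fidelity \<rho> (kraus_compose Ds Cs) = (\<Sum>D\<leftarrow>Ds. \<Sum>C\<leftarrow>Cs. (cmod (mtrace (D * C * \<rho>)))\<^sup>2)"
  unfolding ent_fidelity_def kraus_compose_def by (induction Ds) (simp_all add: o_def)

lemma ent_fidelity_diag_le:
  fixes p :: "nat \<Rightarrow> real"
  assumes Cs: "cptp_kraus d M Cs" and Ds: "cptp_kraus M d Ds"
    and p: "\<And>l. l < d \<Longrightarrow> 0 \<le> p l" "(\<Sum>l<d. p l) = 1" and c: "0 \<le> c"
  shows "ent_fidelity (mat_diag d (\<lambda>l. complex_of_real (p l))) (kraus_compose Ds Cs)
    \<le> (\<Sum>l<d. max (p l - c) 0) + c * real M"
proof -
  define a where "a D C l = (\<Sum>m<M. D $$ (l,m) * C $$ (m,l))" for D C :: "complex mat" and l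
  define f where "f l = (\<Sum>D\<leftarrow>Ds. \<Sum>C\<leftarrow>Cs. (cmod (a D C l))\<^sup>2)" for l
  define g where "g l = (\<Sum>D\<leftarrow>Ds. \<Sum>m<M. (cmod (D $$ (l,m)))\<^sup>2)" for l
  have trace: "mtrace (D * C * mat_diag d (\<lambda>l. complex_of_real (p l)))
      = (\<Sum>l<d. complex_of_real (p l) * a D C l)" if "D \<in> set Ds" "C \<in> set Cs" for D C
    using that Cs Ds unfolding a_def cptp_kraus_def by (simp add: mtrace_mult_mult_diag)
  have "ent_fidelity (mat_diag d (\<lambda>l. complex_of_real (p l))) (kraus_compose Ds Cs)
      = (\<Sum>D\<leftarrow>Ds. \<Sum>C\<leftarrow>Cs. (cmod (\<Sum>l<d. complex_of_real (p l) * a D C l))\<^sup>2)"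
    unfolding ent_fidelity_kraus_compose by (simp add: trace cong: map_cong)
  also have "\<dots> \<le> (\<Sum>D\<leftarrow>Ds. \<Sum>C\<leftarrow>Cs. \<Sum>l<d. p l * (cmod (a D C l))\<^sup>2)"
    using p by (intro sum_list_mono cmod_convex_comb_sq_le) auto
  also have "\<dots> = (\<Sum>l<d. p l * f l)"
    unfolding f_def by (simp add: sum_list_sum_swap sum_list_const_mult)
  also have "\<dots> \<le> (\<Sum>l<d. max (p l - c) 0 + c * g l)"
  proof (rule sum_mono)
    fix l assume "l \<in> {..<d}"
    then have "f l \<le> 1" and "f l \<le> g l"
      unfolding f_def g_def a_def
      using kraus_compose_diag_sq_le_one[OF Cs Ds] kraus_compose_diag_sq_le_row[OF Cs] by auto
    moreover have "0 \<le> f l"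
      unfolding f_def by (auto intro!: sum_list_nonneg)
    ultimately show "p l * f l \<le> max (p l - c) 0 + c * g l"
      using c by (intro mult_le_pos_part_add)
  qed
  also have "\<dots> = (\<Sum>l<d. max (p l - c) 0) + c * real M"
    using cptp_kraus_sum_norm_sq[OF Ds] by (simp add: g_def sum.distrib flip: sum_distrib_left)
  finally show ?thesis .
qed

lemma mtrace_mult_unitary_conj:
  assumes "unitary_mat d U" "T \<in> carrier_mat d d" "R \<in> carrier_mat d d"
  shows "mtrace (T * (U * R * mat_adjoint U)) = mtrace (mat_adjoint U * T * U * R)"
proof -
  have U: "U \<in> carrier_mat d d" using assms(1) unfolding unitary_mat_def by auto
  have "mtrace (T * (U * R * mat_adjoint U)) = mtrace ((T * U * R) * mat_adjoint U)"
    using assms U by (simp add: assoc_mult_mat[of _ d d _ d _ d] mult_carrier_mat[of _ d d _ d])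
  also have "\<dots> = mtrace (mat_adjoint U * (T * U * R))"
    using assms U by (intro mtrace_mult_comm) (auto simp: mult_carrier_mat[of _ d d _ d])
  also have "\<dots> = mtrace (mat_adjoint U * T * U * R)"
    using assms U by (simp add: assoc_mult_mat[of _ d d _ d _ d] mult_carrier_mat[of _ d d _ d])
  finally show ?thesis .
qed

lemma ent_fidelity_unitary_conj:
  assumes U: "unitary_mat d U" and R: "R \<in> carrier_mat d d"
    and Cs: "\<forall>C\<in>set Cs. C \<in> carrier_mat M d" and Ds: "\<forall>D\<in>set Ds. D \<in> carrier_mat d M"
  shows "ent_fidelity (U * R * mat_adjoint U) (kraus_compose Ds Cs)
    = ent_fidelity R (kraus_compose (map (\<lambda>D. mat_adjoint U * D) Ds) (map (\<lambda>C. C * U) Cs))"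
proof -
  have Uc: "U \<in> carrier_mat d d" using U unfolding unitary_mat_def by auto
  have "mtrace (D * C * (U * R * mat_adjoint U)) = mtrace (mat_adjoint U * D * (C * U) * R)"
    if D: "D \<in> carrier_mat d M" and C: "C \<in> carrier_mat M d" for D C
  proof -
    have "mat_adjoint U * (D * C) * U = mat_adjoint U * D * (C * U)"
      using Uc D C by (simp add: assoc_mult_mat[of _ d d _ M _ d] assoc_mult_mat[of _ d M _ d _ d]
          assoc_mult_mat[of _ d d _ d _ d] mult_carrier_mat[of _ d M _ d] mult_carrier_mat[of _ M d _ d])
    with mtrace_mult_unitary_conj[OF U _ R, of "D * C"] D C show ?thesis by simp
  qed
  with Cs Ds show ?thesis
    unfolding ent_fidelity_kraus_compose by (simp add: o_def cong: map_cong)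
qed

lemma ent_fidelity_unitary_diag_le:
  fixes p :: "nat \<Rightarrow> real"
  assumes U: "unitary_mat d U"
    and rho: "density_op d (U * mat_diag d (\<lambda>i. complex_of_real (p i)) * mat_adjoint U)"
    and Cs: "cptp_kraus d M Cs" and Ds: "cptp_kraus M d Ds" and c: "0 \<le> c"
  shows "ent_fidelity (U * mat_diag d (\<lambda>i. complex_of_real (p i)) * mat_adjoint U) (kraus_compose Ds Cs)
    \<le> (\<Sum>i<d. max (p i - c) 0) + c * real M"
proof -
  have "ent_fidelity (U * mat_diag d (\<lambda>i. complex_of_real (p i)) * mat_adjoint U) (kraus_compose Ds Cs)
      = ent_fidelity (mat_diag d (\<lambda>i. complex_of_real (p i)))
          (kraus_compose (map (\<lambda>D. mat_adjoint U * D) Ds) (map (\<lambda>C. C * U) Cs))"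
    using Cs Ds unfolding cptp_kraus_def by (intro ent_fidelity_unitary_conj[OF U]) auto
  also have "\<dots> \<le> (\<Sum>i<d. max (p i - c) 0) + c * real M"
  proof (rule ent_fidelity_diag_le)
    show "cptp_kraus d M (map (\<lambda>C. C * U) Cs)"
      by (rule cptp_kraus_mult_right_unitary[OF Cs U])
    show "cptp_kraus M d (map (\<lambda>D. mat_adjoint U * D) Ds)"
      using U unitary_mat_right_inverse[OF U]
      by (intro cptp_kraus_mult_left_isometry[OF Ds]) (auto simp: unitary_mat_def)
  qed (use density_op_unitary_diag[OF rho U] c in auto)
  finally show ?thesis .
qed

theorem mainTheorem2:
  fixes n d M :: nat and \<rho> :: "complex mat" and Cs Ds :: "complex mat list" and \<gamma> :: real
  assumes rho: "density_op d \<rho>"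
    and sub: "M \<le> d"
    and enc: "cptp_kraus d M Cs"
    and dec: "cptp_kraus M d Ds"
  shows "ent_fidelity \<rho> (kraus_compose Ds Cs)
    \<le> Re (mtrace (spec_proj_ge \<rho> (exp (- real n * \<gamma>) \<cdot>\<^sub>m 1\<^sub>m d)
                  * (\<rho> - exp (- real n * \<gamma>) \<cdot>\<^sub>m 1\<^sub>m d)))
      + exp (- real n * \<gamma>) * real M"
proof -
  define c where "c = exp (- real n * \<gamma>)"
  have herm: "hermitian_mat d \<rho>" and \<rho>: "\<rho> \<in> carrier_mat d d"
    using rho unfolding density_op_def psd_mat_def hermitian_mat_def by auto
  obtain U lam where U: "unitary_mat d U"
    and shifted: "\<rho> - complex_of_real c \<cdot>\<^sub>m 1\<^sub>m d = U * mat_diag d (\<lambda>i. complex_of_real (lam i)) * mat_adjoint U"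
    and proj: "spec_proj_ge \<rho> (complex_of_real c \<cdot>\<^sub>m 1\<^sub>m d)
      = U * mat_diag d (\<lambda>i. if lam i \<ge> 0 then 1 else 0) * mat_adjoint U"
    using spec_proj_nonneg_hermitian[OF hermitian_mat_minus_real_scalar[OF herm]]
    unfolding spec_proj_ge_def by metis
  have \<rho>_eq: "\<rho> = U * mat_diag d (\<lambda>i. complex_of_real (lam i + c)) * mat_adjoint U"
    using unitary_diag_shift[OF U \<rho> shifted] by simp
  have "0 \<le> c" unfolding c_def by simp
  have "ent_fidelity \<rho> (kraus_compose Ds Cs) \<le> (\<Sum>i<d. max (lam i + c - c) 0) + c * real M"
    using ent_fidelity_unitary_diag_le[OF U rho[unfolded \<rho>_eq] enc dec \<open>0 \<le> c\<close>] \<rho>_eq by simp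
  then show ?thesis
    unfolding c_def[symmetric] proj shifted mtrace_unitary_diag_pos_part[OF U] by simp
qed

end
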